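(* Let $n\ge 2$, $d\ge 1$, $\tau>0$, $\sigma>0$. Let $\mu^\star_1,\mu^\star_2\stackrel{\mathrm{i.i.d.}}{\sim}\mathcal N(0,\tau^2 I_d)$ and $\xi_1,\dots,\xi_n\stackrel{\mathrm{i.i.d.}}{\sim}\mathcal N(0,\sigma^2 I_d)$, independent, let $z^\star_1,\dots,z^\star_n\in\{1,2\}$ be fixed labels with both classes nonempty, and $x_i=\mu^\star_{z^\star_i}+\xi_i$. Let $\{C_1,C_2\}$ be a fixed partition of $[n]$ into two nonempty sets with centroids $\widehat\mu_j=|C_j|^{-1}\sum_{k\in C_j}x_k$. Fix $i\in[n]$, let $j$ be such that $i\in C_j$, $\overline j$ the other index, and $c=|C_j|$, $\bar c=|C_{\overline j}|$. If $$\sigma>\frac{\sqrt{2\bar c}\,\tau\,(c-1)}{\sqrt{c(c+\bar c)}},$$ then $$\mathbb P\bigl(\|x_i-\widehat\mu_{\overline j}\|^2<\|x_i-\widehat\mu_j\|^2\bigr)\le\rho^{d/4},$$ where $$\rho=\frac{4\sigma^2(c-1)c^2\bar c(\bar c+1)\bigl(c(\sigma^2+2\tau^2)-2\tau^2\bigr)}{\bigl(-c(\sigma^2+4\tau^2)\bar c+c^2(\sigma^2+2(\sigma^2+\tau^2)\bar c)+2\tau^2\bar c\bigr)^2},$$ and $0\le\rho<1$.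
   Context: $[n]=\{1,\dots,n\}$. Randomness is only over the centers $\mu^\star_\ell$ and the noise $\xi_i$; the labels $z^\star$ and the partition $\{C_1,C_2\}$ are deterministic. *)

theory Defs
  imports "HOL-Probability.Probability"
begin

text \<open>Sample space: coordinates indexed by (r, k) with r in {1..n+2}, k < d.
  Rows r = 1..n are the noise vectors xi_r ~ N(0, sigma^2 I_d);
  rows n+1 and n+2 are the centers mu_1, mu_2 ~ N(0, tau^2 I_d).\<close>
definition gmm_space :: "nat \<Rightarrow> nat \<Rightarrow> real \<Rightarrow> real \<Rightarrow> (nat \<times> nat \<Rightarrow> real) measure" where
  "gmm_space n d \<tau> \<sigma> =
     PiM ({1..n+2} \<times> {..<d})
       (\<lambda>(r, k). density lborel (normal_density 0 (if r \<le> n then \<sigma> else \<tau>)))"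

definition center :: "nat \<Rightarrow> nat \<Rightarrow> (nat \<times> nat \<Rightarrow> real) \<Rightarrow> nat \<Rightarrow> real" where
  "center n l \<omega> k = \<omega> (n + l, k)"

definition datapt :: "nat \<Rightarrow> (nat \<Rightarrow> nat) \<Rightarrow> nat \<Rightarrow> (nat \<times> nat \<Rightarrow> real) \<Rightarrow> nat \<Rightarrow> real" where
  "datapt n z i \<omega> k = center n (z i) \<omega> k + \<omega> (i, k)"

definition centroid :: "nat \<Rightarrow> (nat \<Rightarrow> nat) \<Rightarrow> nat set \<Rightarrow> (nat \<times> nat \<Rightarrow> real) \<Rightarrow> nat \<Rightarrow> real" where
  "centroid n z C \<omega> k = (\<Sum>m\<in>C. datapt n z m \<omega> k) / real (card C)"

definition sqdist :: "nat \<Rightarrow> (nat \<Rightarrow> real) \<Rightarrow> (nat \<Rightarrow> real) \<Rightarrow> real" where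
  "sqdist d u v = (\<Sum>k<d. (u k - v k)\<^sup>2)"

definition rho_bound :: "real \<Rightarrow> real \<Rightarrow> real \<Rightarrow> real \<Rightarrow> real" where
  "rho_bound \<sigma> \<tau> c cb =
     4 * \<sigma>\<^sup>2 * (c - 1) * c\<^sup>2 * cb * (cb + 1) * (c * (\<sigma>\<^sup>2 + 2 * \<tau>\<^sup>2) - 2 * \<tau>\<^sup>2)
     / (- c * (\<sigma>\<^sup>2 + 4 * \<tau>\<^sup>2) * cb + c\<^sup>2 * (\<sigma>\<^sup>2 + 2 * (\<sigma>\<^sup>2 + \<tau>\<^sup>2) * cb) + 2 * \<tau>\<^sup>2 * cb)\<^sup>2"

end

theory Submission
  imports Defs
begin

(*
  Write U and V for x_i minus the centroid of the other cluster and of the own cluster. Both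
  are linear images of the Gaussian sample, so their d coordinates are independent centred
  normals, of variances at least a = sigma^2 (1 + 1/cb) and at most
  b = sigma^2 (1 - 1/c) + 2 tau^2 ((c - 1)/c)^2 respectively; the condition on sigma says
  exactly that b < a. No independence between U and V is needed: for s > 0, AM-GM gives
  1{|U|^2 < |V|^2} <= l/2 exp(-s|U|^2/2) + 1/(2l) exp(s|V|^2/2), and the Gaussian integrals of
  the right-hand side, optimised over l, give ((1 + s a)(1 - s b))^(-d/4). The choice
  s = (a - b)/(2ab) turns this into (4ab/(a + b)^2)^(d/4), and 4ab/(a + b)^2 is rho_bound.
*)

section \<open>A Chernoff bound for comparing two random variables\<close>

lemma one_le_amgm_exp:
  fixes l t u v :: real
  assumes "l > 0" and "t \<ge> 0" and "u < v"
  shows "1 \<le> l / 2 * exp (- t * u) + 1 / (2 * l) * exp (t * v)"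
proof -
  have "1 \<le> sqrt (exp (- t * u) * exp (t * v))"
    using assms by (simp add: mult_exp_exp mult_left_mono flip: right_diff_distrib)
  also have "\<dots> = sqrt ((l * exp (- t * u)) * (exp (t * v) / l))"
    using \<open>l > 0\<close> by simp
  also have "\<dots> \<le> (l * exp (- t * u) + exp (t * v) / l) / 2"
    using \<open>l > 0\<close> by (intro arith_geo_mean_sqrt) auto
  also have "\<dots> = l / 2 * exp (- t * u) + 1 / (2 * l) * exp (t * v)"
    by (simp add: field_simps)
  finally show ?thesis .
qed

lemma (in prob_space) prob_less_le_sqrt_exp_moments:
  fixes f g :: "'a \<Rightarrow> real"
  assumes [measurable]: "f \<in> borel_measurable M" "g \<in> borel_measurable M"
    and "t \<ge> 0"
    and mgf_f: "(\<integral>\<^sup>+x. ennreal (exp (- t * f x)) \<partial>M) = ennreal A"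
    and mgf_g: "(\<integral>\<^sup>+x. ennreal (exp (t * g x)) \<partial>M) = ennreal B"
    and "A > 0" and "B > 0"
  shows "prob {x \<in> space M. f x < g x} \<le> sqrt (A * B)"
proof -
  define l where "l = sqrt (B / A)"
  have "l > 0"
    using assms by (simp add: l_def)
  have pointwise: "indicator {x \<in> space M. f x < g x} x
      \<le> ennreal (l / 2) * ennreal (exp (- t * f x)) + ennreal (1 / (2 * l)) * ennreal (exp (t * g x))" for x
  proof (cases "f x < g x")
    case True
    have "indicator {x \<in> space M. f x < g x} x \<le> (1 :: ennreal)"
      by (simp split: split_indicator)
    also have "\<dots> \<le> ennreal (l / 2 * exp (- t * f x) + 1 / (2 * l) * exp (t * g x))"
      using one_le_amgm_exp[OF \<open>l > 0\<close> \<open>t \<ge> 0\<close> True] by (metis ennreal_1 ennreal_leI)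
    also have "\<dots> = ennreal (l / 2) * ennreal (exp (- t * f x)) + ennreal (1 / (2 * l)) * ennreal (exp (t * g x))"
      using \<open>l > 0\<close> by (subst ennreal_plus) (auto simp: ennreal_mult'[symmetric])
    finally show ?thesis .
  qed simp
  have "emeasure M {x \<in> space M. f x < g x} = (\<integral>\<^sup>+x. indicator {x \<in> space M. f x < g x} x \<partial>M)"
    by simp
  also have "\<dots> \<le> (\<integral>\<^sup>+x. ennreal (l / 2) * ennreal (exp (- t * f x))
      + ennreal (1 / (2 * l)) * ennreal (exp (t * g x)) \<partial>M)"
    by (intro nn_integral_mono pointwise)
  also have "\<dots> = ennreal (l / 2) * (\<integral>\<^sup>+x. ennreal (exp (- t * f x)) \<partial>M)
      + ennreal (1 / (2 * l)) * (\<integral>\<^sup>+x. ennreal (exp (t * g x)) \<partial>M)"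
    by (simp add: nn_integral_add nn_integral_cmult)
  also have "\<dots> = ennreal (l / 2) * ennreal A + ennreal (1 / (2 * l)) * ennreal B"
    unfolding mgf_f mgf_g ..
  also have "\<dots> = ennreal (l / 2 * A + 1 / (2 * l) * B)"
    using \<open>l > 0\<close> \<open>A > 0\<close> \<open>B > 0\<close> by (subst ennreal_plus) (auto simp: ennreal_mult'[symmetric])
  also have "l / 2 * A + 1 / (2 * l) * B = sqrt (A * B)"
    using \<open>A > 0\<close> \<open>B > 0\<close>
    by (simp add: l_def real_sqrt_divide real_sqrt_mult field_simps)
  finally show ?thesis
    using \<open>A > 0\<close> \<open>B > 0\<close> by (simp add: emeasure_eq_measure)
qed

section \<open>Gaussian integrals of exponentiated squares\<close>

lemma nn_integral_normal_density_eq_1: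
  assumes "\<sigma> > 0"
  shows "(\<integral>\<^sup>+y. ennreal (normal_density \<mu> \<sigma> y) \<partial>lborel) = 1"
proof -
  interpret prob_space "density lborel (normal_density \<mu> \<sigma>)"
    using prob_space_normal_density[OF assms] .
  show ?thesis
    using emeasure_space_1 by (simp add: emeasure_density)
qed

lemma nn_integral_exp_neg_square_affine_normal:
  fixes \<sigma> s c S :: real
  defines "D \<equiv> 1 + 2 * s * c\<^sup>2 * \<sigma>\<^sup>2"
  assumes "\<sigma> > 0" and "D > 0"
  shows "(\<integral>\<^sup>+y. ennreal (exp (- s * (c * y + S)\<^sup>2)) \<partial>density lborel (normal_density 0 \<sigma>))
       = ennreal (1 / sqrt D) * ennreal (exp (- (s / D) * S\<^sup>2))"
proof -
  define \<sigma>' where "\<sigma>' = \<sigma> / sqrt D"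
  define m where "m = - 2 * s * c * S * \<sigma>'\<^sup>2"
  define K where "K = exp (- (s / D) * S\<^sup>2) / sqrt D"
  have \<sigma>': "\<sigma>' > 0" "\<sigma>'\<^sup>2 = \<sigma>\<^sup>2 / D"
    using assms by (simp_all add: \<sigma>'_def power_divide)
  have exponent: "- y\<^sup>2 / (2 * \<sigma>\<^sup>2) - s * (c * y + S)\<^sup>2 = - (y - m)\<^sup>2 / (2 * \<sigma>'\<^sup>2) - (s / D) * S\<^sup>2" for y
  proof -
    have "\<sigma> \<noteq> 0" "D \<noteq> 0"
      using assms by auto
    then show ?thesis
      unfolding m_def \<sigma>'(2) by (simp add: divide_simps) (simp add: D_def power2_eq_square algebra_simps)
  qed
  have "sqrt (2 * pi * \<sigma>\<^sup>2) = sqrt D * sqrt (2 * pi * \<sigma>'\<^sup>2)"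
    using \<open>D > 0\<close> unfolding \<sigma>'(2) by (simp add: real_sqrt_mult real_sqrt_divide)
  have "normal_density 0 \<sigma> y * exp (- s * (c * y + S)\<^sup>2) = K * normal_density m \<sigma>' y" for y
  proof -
    have "normal_density 0 \<sigma> y * exp (- s * (c * y + S)\<^sup>2)
        = exp (- y\<^sup>2 / (2 * \<sigma>\<^sup>2) - s * (c * y + S)\<^sup>2) / sqrt (2 * pi * \<sigma>\<^sup>2)"
      by (simp add: normal_density_def exp_diff exp_minus field_simps)
    also have "\<dots> = K * normal_density m \<sigma>' y"
      using \<open>sqrt (2 * pi * \<sigma>\<^sup>2) = _\<close> unfolding exponent normal_density_def K_def
      by (simp add: exp_diff exp_minus field_simps)
    finally show ?thesis .
  qed
  then have "(\<integral>\<^sup>+y. ennreal (exp (- s * (c * y + S)\<^sup>2)) \<partial>density lborel (normal_density 0 \<sigma>))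
      = (\<integral>\<^sup>+y. ennreal K * ennreal (normal_density m \<sigma>' y) \<partial>lborel)"
    using assms by (simp add: nn_integral_density K_def ennreal_mult'[symmetric] flip: ennreal_mult)
  also have "\<dots> = ennreal K"
    by (simp add: nn_integral_cmult nn_integral_normal_density_eq_1[OF \<sigma>'(1)])
  finally show ?thesis
    using \<open>D > 0\<close> by (simp add: K_def ennreal_mult'[symmetric])
qed

lemma nn_integral_exp_neg_square_linear_PiM:
  fixes sd c :: "'i \<Rightarrow> real"
  defines "D \<equiv> \<lambda>I s. 1 + 2 * s * (\<Sum>p\<in>I. (c p)\<^sup>2 * (sd p)\<^sup>2)"
  assumes "finite I" and sd_pos: "\<And>p. sd p > 0" and "D I s > 0"
  shows "(\<integral>\<^sup>+\<omega>. ennreal (exp (- s * ((\<Sum>p\<in>I. c p * \<omega> p) + R)\<^sup>2))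
           \<partial>PiM I (\<lambda>p. density lborel (normal_density 0 (sd p))))
       = ennreal (1 / sqrt (D I s)) * ennreal (exp (- (s / D I s) * R\<^sup>2))"
  using assms(2,4)
proof (induction I arbitrary: s R rule: finite_induct)
  case empty
  show ?case
    by (simp add: D_def PiM_empty nn_integral_count_space_finite)
next
  case (insert a I)
  interpret product_sigma_finite "\<lambda>p. density lborel (normal_density 0 (sd p))"
    by (intro product_sigma_finite.intro prob_space_imp_sigma_finite prob_space_normal_density sd_pos)
  define D1 where "D1 = 1 + 2 * s * (c a)\<^sup>2 * (sd a)\<^sup>2"
  have D_insert: "D (insert a I) s = D1 + 2 * s * (\<Sum>p\<in>I. (c p)\<^sup>2 * (sd p)\<^sup>2)"
    using insert.hyps by (simp add: D_def D1_def algebra_simps)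
  have "D1 > 0"
  proof (cases "s \<ge> 0")
    case False
    then have "s * (\<Sum>p\<in>I. (c p)\<^sup>2 * (sd p)\<^sup>2) \<le> 0"
      by (intro mult_nonpos_nonneg sum_nonneg) simp_all
    then show ?thesis
      using insert.prems D_insert by simp
  qed (simp add: D1_def add_pos_nonneg)
  have D_rescaled: "D I (s / D1) = D (insert a I) s / D1"
    using \<open>D1 > 0\<close> unfolding D_insert by (simp add: D_def field_simps)
  have inner: "(\<integral>\<^sup>+y. ennreal (exp (- s * ((\<Sum>p\<in>insert a I. c p * (x(a := y)) p) + R)\<^sup>2))
        \<partial>density lborel (normal_density 0 (sd a)))
     = ennreal (1 / sqrt D1) * ennreal (exp (- (s / D1) * ((\<Sum>p\<in>I. c p * x p) + R)\<^sup>2))" for x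
  proof -
    have "(\<Sum>p\<in>I. c p * (x(a := y)) p) = (\<Sum>p\<in>I. c p * x p)" for y
      using insert.hyps by (intro sum.cong) auto
    then have "(\<Sum>p\<in>insert a I. c p * (x(a := y)) p) + R = c a * y + ((\<Sum>p\<in>I. c p * x p) + R)" for y
      using insert.hyps by simp
    then show ?thesis
      using nn_integral_exp_neg_square_affine_normal[OF sd_pos[of a], where s=s and c="c a"
          and S="(\<Sum>p\<in>I. c p * x p) + R"] \<open>D1 > 0\<close>
      by (simp only: D1_def)
  qed
  have "D I (s / D1) > 0"
    using insert.prems \<open>D1 > 0\<close> unfolding D_rescaled by simp
  have "(\<integral>\<^sup>+\<omega>. ennreal (exp (- s * ((\<Sum>p\<in>insert a I. c p * \<omega> p) + R)\<^sup>2))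
       \<partial>PiM (insert a I) (\<lambda>p. density lborel (normal_density 0 (sd p))))
     = (\<integral>\<^sup>+x. ennreal (1 / sqrt D1) * ennreal (exp (- (s / D1) * ((\<Sum>p\<in>I. c p * x p) + R)\<^sup>2))
       \<partial>PiM I (\<lambda>p. density lborel (normal_density 0 (sd p))))"
    by (subst product_nn_integral_insert[OF insert.hyps]) (measurable, simp only: inner)
  also have "\<dots> = ennreal (1 / sqrt D1)
      * (ennreal (1 / sqrt (D I (s / D1))) * ennreal (exp (- (s / D1 / D I (s / D1)) * R\<^sup>2)))"
    using \<open>D I (s / D1) > 0\<close> by (subst nn_integral_cmult) (measurable, simp only: insert.IH)
  also have "\<dots> = ennreal (1 / sqrt (D (insert a I) s)) * ennreal (exp (- (s / D (insert a I) s) * R\<^sup>2))"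
    using insert.prems \<open>D1 > 0\<close> unfolding D_rescaled
    by (simp add: real_sqrt_divide ennreal_mult'[symmetric] mult.assoc[symmetric])
  finally show ?case .
qed

lemma nn_integral_exp_neg_square_block_PiM:
  fixes sd \<alpha> :: "'r \<Rightarrow> real" and R :: "'r set" and k :: 'k
  defines "V \<equiv> \<Sum>r\<in>R. (\<alpha> r)\<^sup>2 * (sd r)\<^sup>2"
  assumes "finite R" and "\<And>r. sd r > 0" and "1 + 2 * t * V > 0"
  shows "(\<integral>\<^sup>+\<omega>. ennreal (exp (- t * (\<Sum>r\<in>R. \<alpha> r * \<omega> (r, k))\<^sup>2))
           \<partial>PiM (R \<times> {k}) (\<lambda>p. density lborel (normal_density 0 (sd (fst p)))))
       = ennreal ((1 + 2 * t * V) powr (- 1 / 2))"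
proof -
  have "R \<times> {k} = (\<lambda>r. (r, k)) ` R"
    by auto
  then have reindex: "(\<Sum>p\<in>R \<times> {k}. h p) = (\<Sum>r\<in>R. h (r, k))" for h :: "'r \<times> 'k \<Rightarrow> real"
    by (simp add: sum.reindex inj_on_def)
  show ?thesis
    using nn_integral_exp_neg_square_linear_PiM[where I="R \<times> {k}" and sd="sd \<circ> fst" and c="\<alpha> \<circ> fst"
        and s=t and R=0] assms
    by (simp add: reindex powr_minus_divide powr_half_sqrt)
qed

lemma (in product_sigma_finite) product_nn_integral_restrict_mult:
  assumes "I \<inter> J = {}" and "finite I" and "finite J"
    and [measurable]: "f \<in> borel_measurable (PiM I M)" "g \<in> borel_measurable (PiM J M)"
  shows "(\<integral>\<^sup>+\<omega>. f (restrict \<omega> I) * g (restrict \<omega> J) \<partial>PiM (I \<union> J) M)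
       = integral\<^sup>N (PiM I M) f * integral\<^sup>N (PiM J M) g"
proof -
  have [measurable]: "(\<lambda>\<omega>. restrict \<omega> I) \<in> PiM (I \<union> J) M \<rightarrow>\<^sub>M PiM I M"
    "(\<lambda>\<omega>. restrict \<omega> J) \<in> PiM (I \<union> J) M \<rightarrow>\<^sub>M PiM J M"
    by (auto intro: measurable_restrict_subset)
  have "(\<integral>\<^sup>+\<omega>. f (restrict \<omega> I) * g (restrict \<omega> J) \<partial>PiM (I \<union> J) M)
      = (\<integral>\<^sup>+x. (\<integral>\<^sup>+y. f (restrict x I) * g (restrict y J) \<partial>PiM J M) \<partial>PiM I M)"
    using assms(1) by (subst product_nn_integral_fold[OF assms(1-3)]) simp_all
  also have "\<dots> = (\<integral>\<^sup>+x. f x * integral\<^sup>N (PiM J M) g \<partial>PiM I M)"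
  proof (intro nn_integral_cong)
    have "(\<integral>\<^sup>+y. g (restrict y J) \<partial>PiM J M) = integral\<^sup>N (PiM J M) g"
      by (rule nn_integral_cong) (simp add: space_PiM)
    then show "(\<integral>\<^sup>+y. f (restrict x I) * g (restrict y J) \<partial>PiM J M) = f x * integral\<^sup>N (PiM J M) g"
      if "x \<in> space (PiM I M)" for x
      using that by (simp add: space_PiM nn_integral_cmult)
  qed
  also have "\<dots> = integral\<^sup>N (PiM I M) f * integral\<^sup>N (PiM J M) g"
    by (simp add: nn_integral_multc)
  finally show ?thesis .
qed

lemma nn_integral_exp_neg_sum_squares_PiM:
  fixes sd \<alpha> :: "'r \<Rightarrow> real" and R :: "'r set"
  defines "V \<equiv> \<Sum>r\<in>R. (\<alpha> r)\<^sup>2 * (sd r)\<^sup>2"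
  assumes "finite R" and sd_pos: "\<And>r. sd r > 0" and pos: "1 + 2 * t * V > 0"
  shows "(\<integral>\<^sup>+\<omega>. ennreal (exp (- t * (\<Sum>k<d. (\<Sum>r\<in>R. \<alpha> r * \<omega> (r, k))\<^sup>2)))
           \<partial>PiM (R \<times> {..<d}) (\<lambda>p. density lborel (normal_density 0 (sd (fst p)))))
       = ennreal ((1 + 2 * t * V) powr (- real d / 2))"
proof (induction d)
  case 0
  show ?case
    using pos by (simp add: PiM_empty nn_integral_count_space_finite)
next
  case (Suc d)
  define M where "M = (\<lambda>p :: 'r \<times> nat. density lborel (normal_density 0 (sd (fst p))))"
  define L where "L = (\<lambda>k (\<omega> :: 'r \<times> nat \<Rightarrow> real). \<Sum>r\<in>R. \<alpha> r * \<omega> (r, k))"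
  define E where "E = (\<lambda>k \<omega>. ennreal (exp (- t * (\<Sum>j<k. (L j \<omega>)\<^sup>2))))"
  define F where "F = (\<lambda>\<omega>. ennreal (exp (- t * (L d \<omega>)\<^sup>2)))"
  interpret product_sigma_finite M
    unfolding M_def
    by (intro product_sigma_finite.intro prob_space_imp_sigma_finite prob_space_normal_density sd_pos)
  have blocks: "R \<times> {..<d} \<inter> R \<times> {d} = {}" "finite (R \<times> {..<d})" "finite (R \<times> {d})"
    and split: "R \<times> {..<Suc d} = R \<times> {..<d} \<union> R \<times> {d}"
    using \<open>finite R\<close> by auto
  have "L k (restrict \<omega> (R \<times> K)) = L k \<omega>" if "k \<in> K" for k K \<omega>
    using that by (simp add: L_def)
  then have factor: "E (Suc d) = (\<lambda>\<omega>. E d (restrict \<omega> (R \<times> {..<d})) * F (restrict \<omega> (R \<times> {d})))"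
    by (simp add: fun_eq_iff E_def F_def distrib_left exp_add exp_diff exp_minus ennreal_mult'[symmetric]
        field_simps)
  have "integral\<^sup>N (PiM (R \<times> {..<Suc d}) M) (E (Suc d))
      = integral\<^sup>N (PiM (R \<times> {..<d}) M) (E d) * integral\<^sup>N (PiM (R \<times> {d}) M) F"
    unfolding factor split
    by (rule product_nn_integral_restrict_mult[OF blocks]; unfold E_def F_def L_def M_def; measurable)
  also have "\<dots> = ennreal ((1 + 2 * t * V) powr (- real d / 2)) * ennreal ((1 + 2 * t * V) powr (- 1 / 2))"
    using Suc.IH nn_integral_exp_neg_square_block_PiM[OF \<open>finite R\<close> sd_pos pos[unfolded V_def], of d]
    by (simp add: E_def F_def L_def M_def V_def)
  also have "\<dots> = ennreal ((1 + 2 * t * V) powr (- real (Suc d) / 2))"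
    using pos by (simp add: ennreal_mult'[symmetric] powr_add[symmetric] field_simps)
  finally show ?case
    by (simp add: E_def L_def M_def)
qed

section \<open>Residuals of the mixture model\<close>

definition datapt_coef :: "nat \<Rightarrow> (nat \<Rightarrow> nat) \<Rightarrow> nat \<Rightarrow> nat \<Rightarrow> real" where
  "datapt_coef n z m r = (if r = m then 1 else 0) + (if r = n + z m then 1 else 0)"

definition resid_coef :: "nat \<Rightarrow> (nat \<Rightarrow> nat) \<Rightarrow> nat \<Rightarrow> nat set \<Rightarrow> nat \<Rightarrow> real" where
  "resid_coef n z i C r = datapt_coef n z i r - (\<Sum>m\<in>C. datapt_coef n z m r) / real (card C)"

definition resid_var :: "nat \<Rightarrow> (nat \<Rightarrow> nat) \<Rightarrow> real \<Rightarrow> real \<Rightarrow> nat \<Rightarrow> nat set \<Rightarrow> real" where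
  "resid_var n z \<tau> \<sigma> i C = (\<Sum>r\<in>{1..n+2}. (resid_coef n z i C r)\<^sup>2 * (if r \<le> n then \<sigma> else \<tau>)\<^sup>2)"

lemma datapt_eq_sum_coef:
  assumes "m \<in> {1..n}" and "z m \<in> {1, 2}"
  shows "datapt n z m \<omega> k = (\<Sum>r\<in>{1..n+2}. datapt_coef n z m r * \<omega> (r, k))"
proof -
  have "m \<in> {1..n+2}" "n + z m \<in> {1..n+2}" "m \<noteq> n + z m"
    using assms by auto
  moreover have "datapt_coef n z m r * \<omega> (r, k)
      = (if m = r then \<omega> (m, k) else 0) + (if n + z m = r then \<omega> (n + z m, k) else 0)" for r
    by (auto simp: datapt_coef_def)
  ultimately show ?thesis
    by (simp only: sum.distrib sum.delta' finite_atLeastAtMost if_True datapt_def center_def add.commute)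
qed

lemma centroid_eq_sum_coef:
  assumes "C \<subseteq> {1..n}" and "\<forall>m\<in>{1..n}. z m \<in> {1, 2}"
  shows "centroid n z C \<omega> k = (\<Sum>r\<in>{1..n+2}. (\<Sum>m\<in>C. datapt_coef n z m r) / real (card C) * \<omega> (r, k))"
proof -
  have "(\<Sum>m\<in>C. datapt n z m \<omega> k) = (\<Sum>m\<in>C. \<Sum>r\<in>{1..n+2}. datapt_coef n z m r * \<omega> (r, k))"
    using assms by (intro sum.cong refl datapt_eq_sum_coef) auto
  also have "\<dots> = (\<Sum>r\<in>{1..n+2}. (\<Sum>m\<in>C. datapt_coef n z m r) * \<omega> (r, k))"
    by (simp add: sum.swap[of _ C] sum_distrib_right)
  finally show ?thesis
    by (simp add: centroid_def sum_divide_distrib[symmetric] del: sum.cl_ivl_Suc)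
qed

lemma sqdist_datapt_centroid:
  assumes "C \<subseteq> {1..n}" and "\<forall>m\<in>{1..n}. z m \<in> {1, 2}" and "i \<in> {1..n}"
  shows "sqdist d (datapt n z i \<omega>) (centroid n z C \<omega>)
       = (\<Sum>k<d. (\<Sum>r\<in>{1..n+2}. resid_coef n z i C r * \<omega> (r, k))\<^sup>2)"
  using assms
  by (simp add: sqdist_def datapt_eq_sum_coef centroid_eq_sum_coef resid_coef_def
      left_diff_distrib sum_subtractf del: sum.cl_ivl_Suc)

lemma resid_coef_noise:
  assumes "\<forall>m\<in>{1..n}. z m \<in> {1, 2}" and "C \<subseteq> {1..n}" and "i \<in> {1..n}" and "r \<in> {1..n}"
  shows "resid_coef n z i C r = (if r = i then 1 else 0) - (if r \<in> C then 1 else 0) / real (card C)"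
proof -
  have coef: "datapt_coef n z m r = (if r = m then 1 else 0)" if "m \<in> {1..n}" for m
  proof -
    have "z m \<in> {1, 2}"
      using assms(1) that by blast
    then show ?thesis
      using assms(4) by (auto simp: datapt_coef_def)
  qed
  have "(\<Sum>m\<in>C. datapt_coef n z m r) = (\<Sum>m\<in>C. if r = m then 1 else 0)"
    using assms by (intro sum.cong refl coef) auto
  then show ?thesis
    using assms finite_subset[OF assms(2)] by (simp add: resid_coef_def coef)
qed

lemma sum_resid_coef_noise_squared:
  assumes "\<forall>m\<in>{1..n}. z m \<in> {1, 2}" and "C \<subseteq> {1..n}" and "C \<noteq> {}" and "i \<in> {1..n}"
  shows "(\<Sum>r\<in>{1..n}. (resid_coef n z i C r)\<^sup>2) = 1 + (if i \<in> C then - 1 else 1) / real (card C)"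
proof -
  define c where "c = real (card C)"
  have "c > 0"
    using assms finite_subset[OF assms(2)] by (simp add: c_def card_gt_0_iff)
  have "(resid_coef n z i C r)\<^sup>2
      = (if r = i then 1 else 0) - 2 * (if r = i \<and> i \<in> C then 1 else 0) / c + (if r \<in> C then 1 else 0) / c\<^sup>2"
    if "r \<in> {1..n}" for r
    using \<open>c > 0\<close> unfolding resid_coef_noise[OF assms(1,2,4) that] c_def[symmetric]
    by (auto simp: power2_eq_square field_simps)
  then have "(\<Sum>r\<in>{1..n}. (resid_coef n z i C r)\<^sup>2)
      = 1 - 2 * (if i \<in> C then 1 else 0) / c + (\<Sum>r\<in>{1..n}. if r \<in> C then 1 else 0) / c\<^sup>2"
    using assms(4)
    by (simp add: sum.distrib sum_subtractf sum_divide_distrib[symmetric] sum_distrib_left[symmetric]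
        sum.delta del: sum.cl_ivl_Suc)
  also have "(\<Sum>r\<in>{1..n}. if r \<in> C then 1 else 0) = c"
    using assms(2) by (simp add: c_def sum.If_cases Int_absorb1 del: sum.cl_ivl_Suc)
  finally show ?thesis
    using \<open>c > 0\<close> unfolding c_def[symmetric] by (cases "i \<in> C") (simp_all add: power2_eq_square field_simps)
qed

lemma abs_resid_coef_center_le:
  assumes "C \<subseteq> {1..n}" and "i \<in> C" and "l \<ge> 1"
  shows "\<bar>resid_coef n z i C (n + l)\<bar> \<le> (real (card C) - 1) / real (card C)"
proof -
  define \<delta> where "\<delta> m = (if z i = l then 1 else 0) - (if z m = l then 1 else (0 :: real))" for m
  have "finite C"
    using assms(1) finite_subset by blast
  then have "card C > 0"
    using assms(2) card_gt_0_iff by blast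
  have coef: "datapt_coef n z m (n + l) = (if z m = l then 1 else 0)" if "m \<in> C" for m
    using assms that by (auto simp: datapt_coef_def)
  \<comment> \<open>the point i itself contributes nothing to the sum below\<close>
  have "resid_coef n z i C (n + l) = (\<Sum>m\<in>C. \<delta> m) / real (card C)"
    using \<open>card C > 0\<close> coef assms(2) by (simp add: resid_coef_def \<delta>_def sum_subtractf field_simps)
  also have "(\<Sum>m\<in>C. \<delta> m) = (\<Sum>m\<in>C - {i}. \<delta> m)"
    using \<open>finite C\<close> assms(2) by (simp add: sum.remove \<delta>_def)
  finally have "\<bar>resid_coef n z i C (n + l)\<bar> = \<bar>\<Sum>m\<in>C - {i}. \<delta> m\<bar> / real (card C)"
    by simp
  also have "\<bar>\<Sum>m\<in>C - {i}. \<delta> m\<bar> \<le> (\<Sum>m\<in>C - {i}. 1)"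
    by (rule order_trans[OF sum_abs sum_mono]) (simp add: \<delta>_def)
  also have "(\<Sum>m\<in>C - {i}. 1) = real (card C) - 1"
    using \<open>finite C\<close> assms(2) \<open>card C > 0\<close> by (simp add: of_nat_diff)
  finally show ?thesis
    by (simp add: divide_right_mono)
qed

lemma resid_var_split:
  "resid_var n z \<tau> \<sigma> i C = \<sigma>\<^sup>2 * (\<Sum>r\<in>{1..n}. (resid_coef n z i C r)\<^sup>2)
     + \<tau>\<^sup>2 * ((resid_coef n z i C (n + 1))\<^sup>2 + (resid_coef n z i C (n + 2))\<^sup>2)"
proof -
  have "{1..n+2} = insert (n + 2) (insert (n + 1) {1..n})"
    by auto
  then show ?thesis
    by (simp add: resid_var_def sum_distrib_left algebra_simps del: sum.cl_ivl_Suc)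
qed

lemma resid_var_other_cluster_ge:
  assumes "\<forall>m\<in>{1..n}. z m \<in> {1, 2}" and "C \<subseteq> {1..n}" and "C \<noteq> {}" and "i \<in> {1..n}" and "i \<notin> C"
  shows "\<sigma>\<^sup>2 * (1 + 1 / real (card C)) \<le> resid_var n z \<tau> \<sigma> i C"
  using sum_resid_coef_noise_squared[OF assms(1-4)] assms(5) by (simp add: resid_var_split)

lemma resid_var_own_cluster_le:
  assumes "\<forall>m\<in>{1..n}. z m \<in> {1, 2}" and "C \<subseteq> {1..n}" and "i \<in> C"
  shows "resid_var n z \<tau> \<sigma> i C
       \<le> \<sigma>\<^sup>2 * (1 - 1 / real (card C)) + 2 * \<tau>\<^sup>2 * ((real (card C) - 1) / real (card C))\<^sup>2"
proof -
  have "(resid_coef n z i C (n + l))\<^sup>2 \<le> ((real (card C) - 1) / real (card C))\<^sup>2" if "l \<ge> 1" for l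
  proof -
    have "\<bar>resid_coef n z i C (n + l)\<bar> \<le> (real (card C) - 1) / real (card C)"
      by (rule abs_resid_coef_center_le[OF assms(2,3) that])
    then have "\<bar>resid_coef n z i C (n + l)\<bar>\<^sup>2 \<le> ((real (card C) - 1) / real (card C))\<^sup>2"
      by (rule power_mono) simp
    then show ?thesis
      by simp
  qed
  from this[of 1] this[of 2]
  have "\<tau>\<^sup>2 * ((resid_coef n z i C (n + 1))\<^sup>2 + (resid_coef n z i C (n + 2))\<^sup>2)
      \<le> \<tau>\<^sup>2 * (2 * ((real (card C) - 1) / real (card C))\<^sup>2)"
    by (intro mult_left_mono) simp_all
  moreover have "i \<in> {1..n}" "C \<noteq> {}"
    using assms by auto
  ultimately show ?thesis
    using sum_resid_coef_noise_squared[OF assms(1,2)] assms(3) by (simp add: resid_var_split)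
qed

lemma gmm_space_eq_PiM:
  "gmm_space n d \<tau> \<sigma>
     = PiM ({1..n+2} \<times> {..<d}) (\<lambda>p. density lborel (normal_density 0 (if fst p \<le> n then \<sigma> else \<tau>)))"
  by (simp add: gmm_space_def case_prod_beta')

lemma borel_measurable_sqdist_datapt_centroid:
  assumes "\<forall>m\<in>{1..n}. z m \<in> {1, 2}" and "i \<in> {1..n}" and "C \<subseteq> {1..n}"
  shows "(\<lambda>\<omega>. sqdist d (datapt n z i \<omega>) (centroid n z C \<omega>)) \<in> borel_measurable (gmm_space n d \<tau> \<sigma>)"
  unfolding sqdist_datapt_centroid[OF assms(3,1,2)] gmm_space_eq_PiM by measurable

lemma nn_integral_exp_sqdist_datapt_centroid:
  assumes "\<tau> > 0" and "\<sigma> > 0" and "\<forall>m\<in>{1..n}. z m \<in> {1, 2}" and "i \<in> {1..n}" and "C \<subseteq> {1..n}"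
    and "1 + 2 * t * resid_var n z \<tau> \<sigma> i C > 0"
  shows "(\<integral>\<^sup>+\<omega>. ennreal (exp (- t * sqdist d (datapt n z i \<omega>) (centroid n z C \<omega>))) \<partial>gmm_space n d \<tau> \<sigma>)
       = ennreal ((1 + 2 * t * resid_var n z \<tau> \<sigma> i C) powr (- real d / 2))"
  using nn_integral_exp_neg_sum_squares_PiM[where sd="\<lambda>r. if r \<le> n then \<sigma> else \<tau>"
      and \<alpha>="resid_coef n z i C" and R="{1..n+2}" and t=t and d=d] assms
  by (simp add: sqdist_datapt_centroid gmm_space_eq_PiM resid_var_def del: sum.cl_ivl_Suc)

lemma prob_sqdist_centroid_less_le:
  assumes "\<tau> > 0" and "\<sigma> > 0" and "\<forall>m\<in>{1..n}. z m \<in> {1, 2}" and "i \<in> {1..n}"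
    and "C \<subseteq> {1..n}" and "C' \<subseteq> {1..n}" and "s > 0" and "s * resid_var n z \<tau> \<sigma> i C < 1"
  shows "measure (gmm_space n d \<tau> \<sigma>)
           {\<omega> \<in> space (gmm_space n d \<tau> \<sigma>).
              sqdist d (datapt n z i \<omega>) (centroid n z C' \<omega>) < sqdist d (datapt n z i \<omega>) (centroid n z C \<omega>)}
         \<le> ((1 + s * resid_var n z \<tau> \<sigma> i C') * (1 - s * resid_var n z \<tau> \<sigma> i C)) powr (- real d / 4)"
proof -
  define v where "v = resid_var n z \<tau> \<sigma> i C"
  define v' where "v' = resid_var n z \<tau> \<sigma> i C'"
  have "v' \<ge> 0"
    unfolding v'_def resid_var_def by (intro sum_nonneg) simp
  then have pos': "1 + s * v' > 0"
    using \<open>s > 0\<close> by (simp add: add_pos_nonneg)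
  have pos: "1 - s * v > 0"
    using assms by (simp add: v_def)
  interpret prob_space "gmm_space n d \<tau> \<sigma>"
    unfolding gmm_space_eq_PiM by (intro prob_space_PiM prob_space_normal_density) (simp add: assms)
  have "prob {\<omega> \<in> space (gmm_space n d \<tau> \<sigma>).
      sqdist d (datapt n z i \<omega>) (centroid n z C' \<omega>) < sqdist d (datapt n z i \<omega>) (centroid n z C \<omega>)}
    \<le> sqrt ((1 + s * v') powr (- real d / 2) * (1 - s * v) powr (- real d / 2))"
  proof (rule prob_less_le_sqrt_exp_moments)
    show "(\<integral>\<^sup>+\<omega>. ennreal (exp (- (s / 2) * sqdist d (datapt n z i \<omega>) (centroid n z C' \<omega>))) \<partial>gmm_space n d \<tau> \<sigma>)
        = ennreal ((1 + s * v') powr (- real d / 2))"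
      using nn_integral_exp_sqdist_datapt_centroid[where t="s / 2"] assms pos'
      by (simp add: v'_def)
    show "(\<integral>\<^sup>+\<omega>. ennreal (exp (s / 2 * sqdist d (datapt n z i \<omega>) (centroid n z C \<omega>))) \<partial>gmm_space n d \<tau> \<sigma>)
        = ennreal ((1 - s * v) powr (- real d / 2))"
      using nn_integral_exp_sqdist_datapt_centroid[where t="- s / 2"] assms pos
      by (simp add: v_def)
  qed (use assms pos pos' in \<open>simp_all add: borel_measurable_sqdist_datapt_centroid\<close>)
  also have "\<dots> = (((1 + s * v') * (1 - s * v)) powr (- real d / 2)) powr (1 / 2)"
    using pos pos' by (simp add: powr_mult powr_half_sqrt real_sqrt_mult)
  also have "\<dots> = ((1 + s * v') * (1 - s * v)) powr (- real d / 4)"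
    by (simp add: powr_powr)
  finally show ?thesis
    unfolding v_def v'_def .
qed

section \<open>The bound rho\<close>

lemma rho_bound_eq_ratio:
  fixes \<sigma> \<tau> c cb :: real
  defines "a \<equiv> \<sigma>\<^sup>2 * (1 + 1 / cb)"
    and "b \<equiv> \<sigma>\<^sup>2 * (1 - 1 / c) + 2 * \<tau>\<^sup>2 * ((c - 1) / c)\<^sup>2"
  assumes "c > 0" and "cb > 0"
  shows "rho_bound \<sigma> \<tau> c cb = 4 * a * b / (a + b)\<^sup>2"
proof -
  define K where "K = c * (\<sigma>\<^sup>2 + 2 * \<tau>\<^sup>2) - 2 * \<tau>\<^sup>2"
  define P where "P = \<sigma>\<^sup>2 * (cb + 1) * c\<^sup>2 + (c - 1) * K * cb"
  define W where "W = 4 * \<sigma>\<^sup>2 * (cb + 1) * (c - 1) * K"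
  define Z where "Z = cb * c\<^sup>2"
  have "Z > 0"
    using assms(3,4) by (simp add: Z_def)
  have "a + b = P / Z" "4 * a * b = W / Z"
    using assms(3,4) unfolding a_def b_def P_def W_def Z_def K_def by (simp_all add: field_simps power2_eq_square)
  then have "4 * a * b / (a + b)\<^sup>2 = W * Z / P\<^sup>2"
    using \<open>Z > 0\<close> by (simp add: power_divide power2_eq_square)
  moreover have "- c * (\<sigma>\<^sup>2 + 4 * \<tau>\<^sup>2) * cb + c\<^sup>2 * (\<sigma>\<^sup>2 + 2 * (\<sigma>\<^sup>2 + \<tau>\<^sup>2) * cb) + 2 * \<tau>\<^sup>2 * cb = P"
    unfolding P_def K_def by (simp add: algebra_simps power2_eq_square)
  ultimately show ?thesis
    unfolding rho_bound_def W_def Z_def K_def by (simp add: algebra_simps)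
qed

lemma own_var_bound_less_other_var_bound:
  fixes \<sigma> \<tau> c cb :: real
  assumes "c \<ge> 1" and "cb > 0" and "\<tau> > 0"
    and "\<sigma> > sqrt (2 * cb) * \<tau> * (c - 1) / sqrt (c * (c + cb))"
  shows "\<sigma>\<^sup>2 * (1 - 1 / c) + 2 * \<tau>\<^sup>2 * ((c - 1) / c)\<^sup>2 < \<sigma>\<^sup>2 * (1 + 1 / cb)"
proof -
  define r where "r = sqrt (2 * cb) * \<tau> * (c - 1) / sqrt (c * (c + cb))"
  have "r \<ge> 0"
    using assms by (simp add: r_def)
  then have "r\<^sup>2 < \<sigma>\<^sup>2"
    using assms(4) by (simp add: r_def[symmetric] power_strict_mono)
  moreover have "r\<^sup>2 = 2 * cb * \<tau>\<^sup>2 * (c - 1)\<^sup>2 / (c * (c + cb))"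
    using assms by (simp add: r_def power_divide power_mult_distrib)
  ultimately have "2 * cb * \<tau>\<^sup>2 * (c - 1)\<^sup>2 < \<sigma>\<^sup>2 * (c * (c + cb))"
    using assms by (simp add: divide_less_eq)
  then have "(\<sigma>\<^sup>2 * (c * (c + cb)) - 2 * cb * \<tau>\<^sup>2 * (c - 1)\<^sup>2) / (cb * c\<^sup>2) > 0"
    using assms by (intro divide_pos_pos) simp_all
  moreover have "\<sigma>\<^sup>2 * (1 + 1 / cb) - (\<sigma>\<^sup>2 * (1 - 1 / c) + 2 * \<tau>\<^sup>2 * ((c - 1) / c)\<^sup>2)
      = (\<sigma>\<^sup>2 * (c * (c + cb)) - 2 * cb * \<tau>\<^sup>2 * (c - 1)\<^sup>2) / (cb * c\<^sup>2)"
    using assms by (simp add: field_simps power2_eq_square)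
  ultimately show ?thesis
    by linarith
qed

lemma four_mult_div_square_add_bounds:
  fixes a b :: real
  assumes "0 \<le> b" and "b < a"
  shows "0 \<le> 4 * a * b / (a + b)\<^sup>2" and "4 * a * b / (a + b)\<^sup>2 < 1"
proof -
  have "(a + b)\<^sup>2 - 4 * a * b = (a - b)\<^sup>2"
    by (simp add: power2_eq_square algebra_simps)
  moreover have "(a - b)\<^sup>2 > 0"
    using assms by simp
  ultimately have "4 * a * b < (a + b)\<^sup>2"
    by linarith
  then show "4 * a * b / (a + b)\<^sup>2 < 1" and "0 \<le> 4 * a * b / (a + b)\<^sup>2"
    using assms by simp_all
qed

lemma chernoff_parameter:
  fixes a b :: real
  assumes "0 < b" and "b < a"
  obtains s where "s > 0" and "s * b < 1" and "(1 + s * a) * (1 - s * b) = (a + b)\<^sup>2 / (4 * a * b)"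
proof
  \<comment> \<open>the maximiser of the concave quadratic s \<mapsto> (1 + s a) (1 - s b)\<close>
  define s where "s = (a - b) / (2 * a * b)"
  show "s > 0" and "(1 + s * a) * (1 - s * b) = (a + b)\<^sup>2 / (4 * a * b)"
    using assms by (simp_all add: s_def field_simps power2_eq_square)
  have "s * b = (a - b) / (2 * a)"
    using assms by (simp add: s_def field_simps)
  then show "s * b < 1"
    using assms by (simp add: divide_less_eq)
qed

lemma rho_bound_nonneg_less_1:
  fixes \<sigma> \<tau> c cb :: real
  assumes "c \<ge> 1" and "cb \<ge> 1" and "\<tau> > 0"
    and "\<sigma> > sqrt (2 * cb) * \<tau> * (c - 1) / sqrt (c * (c + cb))"
  shows "0 \<le> rho_bound \<sigma> \<tau> c cb" and "rho_bound \<sigma> \<tau> c cb < 1"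
proof -
  have "0 \<le> \<sigma>\<^sup>2 * (1 - 1 / c) + 2 * \<tau>\<^sup>2 * ((c - 1) / c)\<^sup>2"
    using \<open>c \<ge> 1\<close> by simp
  note bounds = four_mult_div_square_add_bounds[OF this own_var_bound_less_other_var_bound[OF assms(1) _ assms(3,4)]]
  show "0 \<le> rho_bound \<sigma> \<tau> c cb" and "rho_bound \<sigma> \<tau> c cb < 1"
    using bounds assms(1,2) by (simp_all add: rho_bound_eq_ratio)
qed

lemma prob_sqdist_centroid_less_le_of_resid_var_bounds:
  assumes "\<tau> > 0" and "\<sigma> > 0" and "\<forall>m\<in>{1..n}. z m \<in> {1, 2}" and "i \<in> {1..n}"
    and "C \<subseteq> {1..n}" and "C' \<subseteq> {1..n}"
    and "0 < b" and "b < a" and v: "resid_var n z \<tau> \<sigma> i C \<le> b" and v': "a \<le> resid_var n z \<tau> \<sigma> i C'"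
  shows "measure (gmm_space n d \<tau> \<sigma>)
           {\<omega> \<in> space (gmm_space n d \<tau> \<sigma>).
              sqdist d (datapt n z i \<omega>) (centroid n z C' \<omega>) < sqdist d (datapt n z i \<omega>) (centroid n z C \<omega>)}
         \<le> (4 * a * b / (a + b)\<^sup>2) powr (real d / 4)"
proof -
  obtain s where "s > 0" "s * b < 1" and s_opt: "(1 + s * a) * (1 - s * b) = (a + b)\<^sup>2 / (4 * a * b)"
    using chernoff_parameter[OF \<open>0 < b\<close> \<open>b < a\<close>] by blast
  have "s * resid_var n z \<tau> \<sigma> i C \<le> s * b"
    using v \<open>s > 0\<close> by (simp add: mult_left_mono)
  then have "s * resid_var n z \<tau> \<sigma> i C < 1"
    using \<open>s * b < 1\<close> by linarith
  with assms(1-6) \<open>s > 0\<close>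
  have "measure (gmm_space n d \<tau> \<sigma>)
         {\<omega> \<in> space (gmm_space n d \<tau> \<sigma>).
            sqdist d (datapt n z i \<omega>) (centroid n z C' \<omega>) < sqdist d (datapt n z i \<omega>) (centroid n z C \<omega>)}
      \<le> ((1 + s * resid_var n z \<tau> \<sigma> i C') * (1 - s * resid_var n z \<tau> \<sigma> i C)) powr (- real d / 4)"
    by (intro prob_sqdist_centroid_less_le)
  also have "\<dots> \<le> ((1 + s * a) * (1 - s * b)) powr (- real d / 4)"
  proof (rule powr_mono2')
    show "0 < (1 + s * a) * (1 - s * b)"
      using \<open>s > 0\<close> \<open>s * b < 1\<close> \<open>0 < b\<close> \<open>b < a\<close> by (intro mult_pos_pos add_pos_pos) simp_all
    show "(1 + s * a) * (1 - s * b) \<le> (1 + s * resid_var n z \<tau> \<sigma> i C') * (1 - s * resid_var n z \<tau> \<sigma> i C)"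
      using v v' \<open>s > 0\<close> \<open>s * b < 1\<close> \<open>0 < b\<close> \<open>b < a\<close>
      by (intro mult_mono) (simp_all add: mult_left_mono)
  qed simp
  also have "\<dots> = (4 * a * b / (a + b)\<^sup>2) powr (real d / 4)"
    using \<open>0 < b\<close> \<open>b < a\<close> by (simp add: s_opt powr_minus_divide powr_divide)
  finally show ?thesis .
qed

lemma prob_closer_to_other_centroid_le:
  fixes Cj Cjb :: "nat set"
  defines "c \<equiv> real (card Cj)" and "cb \<equiv> real (card Cjb)"
  assumes "\<tau> > 0" and "\<sigma> > 0" and zf: "\<forall>m\<in>{1..n}. z m \<in> {1, 2}"
    and "Cj \<subseteq> {1..n}" and "Cjb \<subseteq> {1..n}" and "Cjb \<noteq> {}" and "i \<in> Cj" and "i \<notin> Cjb"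
    and separated: "\<sigma> > sqrt (2 * cb) * \<tau> * (c - 1) / sqrt (c * (c + cb))"
  shows "measure (gmm_space n d \<tau> \<sigma>)
           {\<omega> \<in> space (gmm_space n d \<tau> \<sigma>).
              sqdist d (datapt n z i \<omega>) (centroid n z Cjb \<omega>) < sqdist d (datapt n z i \<omega>) (centroid n z Cj \<omega>)}
         \<le> rho_bound \<sigma> \<tau> c cb powr (real d / 4)"
proof -
  have "finite Cj" "finite Cjb"
    using \<open>Cj \<subseteq> {1..n}\<close> \<open>Cjb \<subseteq> {1..n}\<close> finite_subset by auto
  then have "c \<ge> 1" "cb \<ge> 1"
    using \<open>i \<in> Cj\<close> \<open>Cjb \<noteq> {}\<close> by (auto simp: c_def cb_def Suc_le_eq card_gt_0_iff)
  have "i \<in> {1..n}"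
    using \<open>i \<in> Cj\<close> \<open>Cj \<subseteq> {1..n}\<close> by blast
  show ?thesis
  proof (cases "c = 1")
    case True
    then have "Cj = {i}"
      using \<open>i \<in> Cj\<close> \<open>finite Cj\<close> by (simp add: c_def card_1_singleton_iff) (metis singletonD)
    then have "sqdist d (datapt n z i \<omega>) (centroid n z Cj \<omega>) = 0" for \<omega>
      by (simp add: sqdist_def centroid_def)
    moreover have "\<not> sqdist d u v < 0" for u v
      unfolding sqdist_def by (simp add: leD sum_nonneg)
    ultimately show ?thesis
      by simp
  next
    case False
    define a where "a = \<sigma>\<^sup>2 * (1 + 1 / cb)"
    define b where "b = \<sigma>\<^sup>2 * (1 - 1 / c) + 2 * \<tau>\<^sup>2 * ((c - 1) / c)\<^sup>2"
    have "0 < b"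
      using False \<open>c \<ge> 1\<close> \<open>\<sigma> > 0\<close> by (simp add: b_def add_pos_nonneg)
    moreover have "b < a"
      unfolding a_def b_def
      using own_var_bound_less_other_var_bound \<open>c \<ge> 1\<close> \<open>cb \<ge> 1\<close> \<open>\<tau> > 0\<close> separated by simp
    moreover have "resid_var n z \<tau> \<sigma> i Cj \<le> b"
      using resid_var_own_cluster_le[OF zf \<open>Cj \<subseteq> {1..n}\<close> \<open>i \<in> Cj\<close>] by (simp add: b_def c_def)
    moreover have "a \<le> resid_var n z \<tau> \<sigma> i Cjb"
      using resid_var_other_cluster_ge[OF zf \<open>Cjb \<subseteq> {1..n}\<close> \<open>Cjb \<noteq> {}\<close> \<open>i \<in> {1..n}\<close> \<open>i \<notin> Cjb\<close>]
      by (simp add: a_def cb_def)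
    moreover have "rho_bound \<sigma> \<tau> c cb = 4 * a * b / (a + b)\<^sup>2"
      unfolding a_def b_def using \<open>c \<ge> 1\<close> \<open>cb \<ge> 1\<close> by (simp add: rho_bound_eq_ratio)
    ultimately show ?thesis
      using prob_sqdist_centroid_less_le_of_resid_var_bounds[OF \<open>\<tau> > 0\<close> \<open>\<sigma> > 0\<close> zf \<open>i \<in> {1..n}\<close>
          \<open>Cj \<subseteq> {1..n}\<close> \<open>Cjb \<subseteq> {1..n}\<close>]
      by simp
  qed
qed

theorem theorem3p4:
  fixes n d :: nat and \<tau> \<sigma> :: real and z :: "nat \<Rightarrow> nat"
    and C1 C2 :: "nat set" and i :: nat
  assumes "n \<ge> 2" and "d \<ge> 1" and "\<tau> > 0" and "\<sigma> > 0"
    and "\<forall>m\<in>{1..n}. z m \<in> {1, 2}"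
    and "\<exists>m\<in>{1..n}. z m = 1" and "\<exists>m\<in>{1..n}. z m = 2"
    and "C1 \<union> C2 = {1..n}" and "C1 \<inter> C2 = {}" and "C1 \<noteq> {}" and "C2 \<noteq> {}"
    and "i \<in> {1..n}"
    and "(Cj, Cjb) = (if i \<in> C1 then (C1, C2) else (C2, C1))"
    and "c = real (card Cj)" and "cb = real (card Cjb)"
    and "\<sigma> > sqrt (2 * cb) * \<tau> * (c - 1) / sqrt (c * (c + cb))"
  shows "measure (gmm_space n d \<tau> \<sigma>)
           {\<omega> \<in> space (gmm_space n d \<tau> \<sigma>).
              sqdist d (datapt n z i \<omega>) (centroid n z Cjb \<omega>)
                < sqdist d (datapt n z i \<omega>) (centroid n z Cj \<omega>)}
           \<le> rho_bound \<sigma> \<tau> c cb powr (real d / 4)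
         \<and> 0 \<le> rho_bound \<sigma> \<tau> c cb \<and> rho_bound \<sigma> \<tau> c cb < 1"
proof -
  have clusters: "Cj \<subseteq> {1..n}" "Cjb \<subseteq> {1..n}" "i \<in> Cj" "i \<notin> Cjb" "Cjb \<noteq> {}"
    using assms(8-13) by (auto split: if_splits)
  then have "finite Cj" "finite Cjb"
    using finite_subset by auto
  then have "c \<ge> 1" "cb \<ge> 1"
    using clusters assms(14,15) by (auto simp: Suc_le_eq card_gt_0_iff)
  show ?thesis
    using prob_closer_to_other_centroid_le[OF assms(3-5) clusters(1,2,5,3,4)]
      rho_bound_nonneg_less_1[OF \<open>c \<ge> 1\<close> \<open>cb \<ge> 1\<close> assms(3,16)] assms(14-16)
    by simp
qed

end
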